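(* Let $G$ be an Abelian group and $(\rho,V)$ a linear representation of $G$ on a finite-dimensional vector space $V$ over a field $k$. Let $A$ be a nonempty finite subset of $G$ and $Y\subset V$ with $\langle Y\rangle\neq\{0\}$ and $\dim(A\cdot Y)\leq\alpha\dim Y$ for some $\alpha\in\mathbb{R}_{\geq0}$. Then there exists a $k$-subspace $Z\neq\{0\}$ of $\langle Y\rangle$ such that $\dim(A^{n}\cdot Z)\leq\alpha^{n}\dim Z$ for every integer $n\geq1$.
   Context: $g\cdot v=\rho(g)v$; $\langle Y\rangle$ is the $k$-span of $Y$ and $\dim Y:=\dim\langle Y\rangle$; for $S\subset G$, $S\cdot Z$ is the $k$-span of $\{s\cdot z\mid s\in S,z\in Z\}$; $A^n=\{a_1\cdots a_n\mid a_i\in A\}$. *)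

theory Defs
  imports Complex_Main "HOL-Algebra.Group"
begin

fun set_pow :: "('g, 'b) monoid_scheme \<Rightarrow> 'g set \<Rightarrow> nat \<Rightarrow> 'g set" where
  "set_pow G A 0 = {\<one>\<^bsub>G\<^esub>}"
| "set_pow G A (Suc n) = {a \<otimes>\<^bsub>G\<^esub> b | a b. a \<in> set_pow G A n \<and> b \<in> A}"

definition act_span :: "('k::field \<Rightarrow> 'v::ab_group_add \<Rightarrow> 'v) \<Rightarrow> ('g \<Rightarrow> 'v \<Rightarrow> 'v) \<Rightarrow> 'g set \<Rightarrow> 'v set \<Rightarrow> 'v set" where
  "act_span scale \<rho> S Z = Modules.module.span scale {\<rho> s z | s z. s \<in> S \<and> z \<in> Z}"

text \<open>(\<rho>, V) is a linear representation of G on V (V = the whole type 'v):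
  each \<rho> g is an invertible k-linear map, and \<rho> is a group homomorphism.\<close>
definition is_representation :: "('g, 'b) monoid_scheme \<Rightarrow> ('k::field \<Rightarrow> 'v::ab_group_add \<Rightarrow> 'v) \<Rightarrow> ('g \<Rightarrow> 'v \<Rightarrow> 'v) \<Rightarrow> bool" where
  "is_representation G scale \<rho> \<longleftrightarrow>
     (\<forall>g\<in>carrier G. Vector_Spaces.linear scale scale (\<rho> g) \<and> bij (\<rho> g)) \<and>
     \<rho> \<one>\<^bsub>G\<^esub> = id \<and>
     (\<forall>g\<in>carrier G. \<forall>h\<in>carrier G. \<rho> (g \<otimes>\<^bsub>G\<^esub> h) = \<rho> g \<circ> \<rho> h)"

end

theory Submission
  imports Defs "HOL-Algebra.Coset"
begin

text \<open>Petridis' argument, transported from sumsets to spans of orbits. Pick a nonzero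
  subspace \<open>Z \<subseteq> \<langle>Y\<rangle>\<close> minimising \<open>K = dim (A\<cdot>Z) / dim Z\<close>; then \<open>K \<le> \<alpha>\<close>. One shows
  \<open>dim (CA\<cdot>Z) \<le> K dim (C\<cdot>Z)\<close> for every finite \<open>C \<subseteq> G\<close> by induction on \<open>C\<close>. When \<open>x\<close> is
  added to \<open>C\<close>, put \<open>W = {z \<in> Z. xA\<cdot>z \<subseteq> CA\<cdot>Z}\<close>: the new summand \<open>xA\<cdot>Z\<close> of \<open>CA\<cdot>Z\<close> meets
  the old one in a space containing \<open>xA\<cdot>W\<close>, so by minimality \<open>CA\<cdot>Z\<close> grows by at most
  \<open>K (dim Z - dim W)\<close>; and since \<open>G\<close> is abelian, \<open>C\<cdot>Z \<inter> x\<cdot>Z \<subseteq> x\<cdot>W\<close>, so \<open>C\<cdot>Z\<close> grows by at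
  least \<open>dim Z - dim W\<close>. Taking \<open>C = A\<^sup>n\<close> and iterating gives \<open>dim (A\<^sup>n\<cdot>Z) \<le> K\<^sup>n dim Z\<close>.\<close>

lemma set_pow_Suc_set_mult: "set_pow G A (Suc n) = set_pow G A n <#>\<^bsub>G\<^esub> A"
  by (auto simp: set_mult_def)

lemma finite_set_pow: "finite A \<Longrightarrow> finite (set_pow G A n)"
  by (induction n) (simp_all del: set_pow.simps(2) add: set_pow_Suc_set_mult set_mult_def)

lemma (in monoid) set_pow_subset_carrier: "A \<subseteq> carrier G \<Longrightarrow> set_pow G A n \<subseteq> carrier G"
  by (induction n) (simp_all del: set_pow.simps(2) add: set_pow_Suc_set_mult set_mult_closed)

lemma insert_set_mult: "insert x C <#>\<^bsub>G\<^esub> A = (C <#>\<^bsub>G\<^esub> A) \<union> (x <#\<^bsub>G\<^esub> A)"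
  by (auto simp: set_mult_def l_coset_def)

lemma (in vector_space) obtain_finite_dimensional_if_finite_span:
  assumes "finite B" "span B = UNIV"
  obtains Basis where "finite_dimensional_vector_space scale Basis"
proof -
  obtain Basis where "Basis \<subseteq> B" "independent Basis" "B \<subseteq> span Basis"
    using basis_exists by metis
  moreover from this have "span Basis = UNIV"
    using assms(2) span_minimal[of B "span Basis"] by auto
  ultimately show thesis
    using assms(1) finite_subset
    by (intro that finite_dimensional_vector_space.intro finite_dimensional_vector_space_axioms.intro
        vector_space_axioms) auto
qed

locale linear_representation = finite_dimensional_vector_space scale Basis
  for scale :: "'k::field \<Rightarrow> 'v::ab_group_add \<Rightarrow> 'v" and Basis :: "'v set" +
  fixes G :: "('g, 'b) monoid_scheme" and \<rho> :: "'g \<Rightarrow> 'v \<Rightarrow> 'v"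
  assumes representation: "is_representation G scale \<rho>"
begin

interpretation endo: finite_dimensional_vector_space_pair_1 scale Basis scale
  by unfold_locales

lemma linear_rep: "g \<in> carrier G \<Longrightarrow> Vector_Spaces.linear scale scale (\<rho> g)"
  using representation unfolding is_representation_def by blast

lemma inj_rep: "g \<in> carrier G \<Longrightarrow> inj (\<rho> g)"
  using representation unfolding is_representation_def bij_def by blast

lemma rep_one: "\<rho> \<one>\<^bsub>G\<^esub> z = z"
  using representation unfolding is_representation_def by auto

lemma rep_mult: "g \<in> carrier G \<Longrightarrow> h \<in> carrier G \<Longrightarrow> \<rho> (g \<otimes>\<^bsub>G\<^esub> h) z = \<rho> g (\<rho> h z)"
  using representation unfolding is_representation_def by auto

lemma rep_image_span: "g \<in> carrier G \<Longrightarrow> \<rho> g ` span S = span (\<rho> g ` S)"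
  using endo.linear_span_image[OF linear_rep] by metis

lemma dim_rep_image: "g \<in> carrier G \<Longrightarrow> dim (\<rho> g ` S) = dim S"
  using endo.dim_image_eq[OF linear_rep] inj_rep by (metis inj_on_subset subset_UNIV)

lemma subspace_act_span [simp]: "subspace (act_span scale \<rho> S Z)"
  unfolding act_span_def by simp

lemma act_span_mono: "S \<subseteq> T \<Longrightarrow> Z \<subseteq> Z' \<Longrightarrow> act_span scale \<rho> S Z \<subseteq> act_span scale \<rho> T Z'"
  unfolding act_span_def by (rule span_mono) blast

lemma act_span_span:
  assumes "S \<subseteq> carrier G"
  shows "act_span scale \<rho> S (span Y) = act_span scale \<rho> S Y"
proof
  show "act_span scale \<rho> S (span Y) \<subseteq> act_span scale \<rho> S Y"
    unfolding act_span_def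
  proof (rule span_minimal)
    show "{\<rho> s z |s z. s \<in> S \<and> z \<in> span Y} \<subseteq> span {\<rho> s z |s z. s \<in> S \<and> z \<in> Y}"
    proof
      fix v assume "v \<in> {\<rho> s z |s z. s \<in> S \<and> z \<in> span Y}"
      then obtain s z where v: "v = \<rho> s z" "s \<in> S" "z \<in> span Y"
        by blast
      then have "v \<in> \<rho> s ` span Y"
        by blast
      then have "v \<in> span (\<rho> s ` Y)"
        using assms v(2) rep_image_span[of s Y] by auto
      moreover have "span (\<rho> s ` Y) \<subseteq> span {\<rho> s z |s z. s \<in> S \<and> z \<in> Y}"
        using v(2) by (intro span_mono) blast
      ultimately show "v \<in> span {\<rho> s z |s z. s \<in> S \<and> z \<in> Y}"
        by blast
    qed
  qed simp
qed (simp add: act_span_mono span_superset)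

lemma act_span_one: "subspace Z \<Longrightarrow> act_span scale \<rho> {\<one>\<^bsub>G\<^esub>} Z = Z"
  by (simp add: act_span_def rep_one)

lemma act_span_singleton:
  assumes "g \<in> carrier G" "subspace Z"
  shows "act_span scale \<rho> {g} Z = \<rho> g ` Z"
proof -
  have "{\<rho> s z |s z. s \<in> {g} \<and> z \<in> Z} = \<rho> g ` Z" by auto
  moreover have "span (\<rho> g ` Z) = \<rho> g ` Z"
    by (metis assms rep_image_span span_eq_iff)
  ultimately show ?thesis
    unfolding act_span_def by simp
qed

lemma rep_image_act_span:
  assumes g: "g \<in> carrier G" and S: "S \<subseteq> carrier G"
  shows "\<rho> g ` act_span scale \<rho> S Z = act_span scale \<rho> (g <#\<^bsub>G\<^esub> S) Z"
proof -
  have "\<rho> g ` {\<rho> s z |s z. s \<in> S \<and> z \<in> Z} = {\<rho> s z |s z. s \<in> g <#\<^bsub>G\<^esub> S \<and> z \<in> Z}"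
  proof (intro equalityI subsetI)
    fix v assume "v \<in> \<rho> g ` {\<rho> s z |s z. s \<in> S \<and> z \<in> Z}"
    then obtain s z where v: "v = \<rho> g (\<rho> s z)" "s \<in> S" "z \<in> Z"
      by blast
    then have "v = \<rho> (g \<otimes>\<^bsub>G\<^esub> s) z"
      using g S by (simp add: rep_mult subsetD)
    with v(2,3) show "v \<in> {\<rho> s z |s z. s \<in> g <#\<^bsub>G\<^esub> S \<and> z \<in> Z}"
      unfolding l_coset_def by blast
  next
    fix v assume "v \<in> {\<rho> s z |s z. s \<in> g <#\<^bsub>G\<^esub> S \<and> z \<in> Z}"
    then obtain s z where v: "v = \<rho> (g \<otimes>\<^bsub>G\<^esub> s) z" "s \<in> S" "z \<in> Z"
      unfolding l_coset_def by blast
    then have "v = \<rho> g (\<rho> s z)"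
      using g S by (simp add: rep_mult subsetD)
    with v(2,3) show "v \<in> \<rho> g ` {\<rho> s z |s z. s \<in> S \<and> z \<in> Z}"
      by blast
  qed
  then show ?thesis
    unfolding act_span_def using rep_image_span[OF g] by simp
qed

lemma dim_act_span_l_coset:
  assumes "g \<in> carrier G" "S \<subseteq> carrier G"
  shows "dim (act_span scale \<rho> (g <#\<^bsub>G\<^esub> S) Z) = dim (act_span scale \<rho> S Z)"
  using rep_image_act_span[OF assms] dim_rep_image[OF assms(1)] by metis

lemma dim_act_span_Un:
  "dim (act_span scale \<rho> (S \<union> T) Z) + dim (act_span scale \<rho> S Z \<inter> act_span scale \<rho> T Z)
    = dim (act_span scale \<rho> S Z) + dim (act_span scale \<rho> T Z)"
proof -
  have "{\<rho> s z |s z. s \<in> S \<union> T \<and> z \<in> Z}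
      = {\<rho> s z |s z. s \<in> S \<and> z \<in> Z} \<union> {\<rho> s z |s z. s \<in> T \<and> z \<in> Z}"
    by auto
  then have "act_span scale \<rho> (S \<union> T) Z
      = {p + q |p q. p \<in> act_span scale \<rho> S Z \<and> q \<in> act_span scale \<rho> T Z}"
    unfolding act_span_def using span_Un by metis
  then show ?thesis
    using dim_sums_Int[OF subspace_act_span subspace_act_span] by simp
qed

definition act_preimage :: "'g set \<Rightarrow> 'v set \<Rightarrow> 'v set \<Rightarrow> 'v set" where
  "act_preimage S Z U = {z \<in> Z. \<forall>s\<in>S. \<rho> s z \<in> U}"

lemma subspace_act_preimage:
  assumes "subspace Z" "subspace U" "S \<subseteq> carrier G"
  shows "subspace (act_preimage S Z U)"
proof -
  have "act_preimage S Z U = Z \<inter> (\<Inter>s\<in>S. {z. \<rho> s z \<in> U})"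
    by (auto simp: act_preimage_def)
  moreover have "subspace {z. \<rho> s z \<in> U}" if "s \<in> S" for s
    using endo.linear_subspace_linear_preimage[OF linear_rep] assms that by blast
  ultimately show ?thesis
    using assms(1) by (simp add: subspace_Int subspace_inter)
qed

lemma act_span_act_preimage_subset:
  assumes "subspace U"
  shows "act_span scale \<rho> S (act_preimage S Z U) \<subseteq> U \<inter> act_span scale \<rho> S Z"
proof -
  have "act_span scale \<rho> S (act_preimage S Z U) \<subseteq> U"
    unfolding act_span_def act_preimage_def using assms by (intro span_minimal) auto
  moreover have "act_span scale \<rho> S (act_preimage S Z U) \<subseteq> act_span scale \<rho> S Z"
    by (rule act_span_mono) (auto simp: act_preimage_def)
  ultimately show ?thesis
    by blast
qed

lemma dim_pos:
  assumes "subspace Z" "Z \<noteq> {0}"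
  shows "0 < dim Z"
proof -
  have "\<not> Z \<subseteq> {0}"
    using assms subspace_0 by blast
  then have "dim Z \<noteq> 0"
    using dim_eq_0 by blast
  then show ?thesis
    by (simp only: neq0_conv)
qed

lemma obtain_subspace_minimal_expansion:
  assumes "span Y \<noteq> {0}"
  obtains Z K where "subspace Z" "Z \<subseteq> span Y" "Z \<noteq> {0}" "0 \<le> K"
    "real (dim (act_span scale \<rho> S Z)) = K * real (dim Z)"
    "\<And>W. subspace W \<Longrightarrow> W \<subseteq> span Y \<Longrightarrow> K * real (dim W) \<le> real (dim (act_span scale \<rho> S W))"
proof -
  define candidates where "candidates = {Z. subspace Z \<and> Z \<subseteq> span Y \<and> Z \<noteq> {0}}"
  define ratio where "ratio Z = real (dim (act_span scale \<rho> S Z)) / real (dim Z)" for Z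
  have "ratio ` candidates \<subseteq> (\<lambda>(p, q). real p / real q) ` ({..dimension} \<times> {..dimension})"
  proof (rule image_subsetI)
    fix Z
    show "ratio Z \<in> (\<lambda>(p, q). real p / real q) ` ({..dimension} \<times> {..dimension})"
      unfolding ratio_def using dim_subset_UNIV
      by (intro image_eqI[where x = "(dim (act_span scale \<rho> S Z), dim Z)"]) auto
  qed
  then have "finite (ratio ` candidates)"
    by (rule finite_subset) simp
  moreover have "span Y \<in> candidates"
    using assms by (simp add: candidates_def)
  ultimately obtain m where "m \<in> ratio ` candidates" and m_min: "\<not> (\<exists>r \<in> ratio ` candidates. r < m)"
    using ex_min_if_finite[of "ratio ` candidates"] by blast
  then obtain Z where Z: "Z \<in> candidates" and Z_min: "\<And>W. W \<in> candidates \<Longrightarrow> ratio Z \<le> ratio W"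
    by (auto simp: not_less)
  show thesis
  proof (rule that[of Z "ratio Z"])
    show Z_sub: "subspace Z" "Z \<subseteq> span Y" "Z \<noteq> {0}"
      using Z by (simp_all add: candidates_def)
    show "0 \<le> ratio Z"
      by (simp add: ratio_def)
    show "real (dim (act_span scale \<rho> S Z)) = ratio Z * real (dim Z)"
      using dim_pos[OF Z_sub(1,3)] by (simp del: dim_eq_0 add: ratio_def)
    fix W assume W: "subspace W" "W \<subseteq> span Y"
    show "ratio Z * real (dim W) \<le> real (dim (act_span scale \<rho> S W))"
    proof (cases "W = {0}")
      case False
      with W have "W \<in> candidates" by (simp add: candidates_def)
      with Z_min[of W] dim_pos[OF W(1) False] show ?thesis
        by (simp add: ratio_def pos_le_divide_eq)
    qed simp
  qed
qed

end

locale abelian_representation = linear_representation +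
  assumes abelian: "comm_group G"
begin

interpretation G: comm_group G
  by (rule abelian)

lemma rep_image_act_span_subset_set_mult:
  assumes "a \<in> A" "A \<subseteq> carrier G" "C \<subseteq> carrier G"
  shows "\<rho> a ` act_span scale \<rho> C Z \<subseteq> act_span scale \<rho> (C <#>\<^bsub>G\<^esub> A) Z"
proof -
  have "a <#\<^bsub>G\<^esub> C \<subseteq> C <#>\<^bsub>G\<^esub> A"
  proof
    fix s assume "s \<in> a <#\<^bsub>G\<^esub> C"
    then obtain c where c: "c \<in> C" and s: "s = a \<otimes>\<^bsub>G\<^esub> c"
      unfolding l_coset_def by blast
    have "a \<in> carrier G" "c \<in> carrier G"
      using assms c by auto
    with s have "s = c \<otimes>\<^bsub>G\<^esub> a"
      by (simp add: G.m_comm)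
    with c assms(1) show "s \<in> C <#>\<^bsub>G\<^esub> A"
      unfolding set_mult_def by blast
  qed
  then have "act_span scale \<rho> (a <#\<^bsub>G\<^esub> C) Z \<subseteq> act_span scale \<rho> (C <#>\<^bsub>G\<^esub> A) Z"
    by (rule act_span_mono) simp
  moreover have "\<rho> a ` act_span scale \<rho> C Z = act_span scale \<rho> (a <#\<^bsub>G\<^esub> C) Z"
    using assms by (intro rep_image_act_span) auto
  ultimately show ?thesis by simp
qed

lemma act_span_inter_rep_image_subset:
  assumes x: "x \<in> carrier G" and A: "A \<subseteq> carrier G" and C: "C \<subseteq> carrier G"
  shows "act_span scale \<rho> C Z \<inter> \<rho> x ` Z
    \<subseteq> \<rho> x ` act_preimage (x <#\<^bsub>G\<^esub> A) Z (act_span scale \<rho> (C <#>\<^bsub>G\<^esub> A) Z)"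
proof
  fix v assume "v \<in> act_span scale \<rho> C Z \<inter> \<rho> x ` Z"
  then obtain z where z: "z \<in> Z" "v = \<rho> x z" and v: "v \<in> act_span scale \<rho> C Z"
    by auto
  have "\<rho> s z \<in> act_span scale \<rho> (C <#>\<^bsub>G\<^esub> A) Z" if s: "s \<in> x <#\<^bsub>G\<^esub> A" for s
  proof -
    obtain a where a: "a \<in> A" "s = x \<otimes>\<^bsub>G\<^esub> a"
      using s unfolding l_coset_def by blast
    have a_carrier: "a \<in> carrier G"
      using a(1) A by auto
    have "\<rho> s z = \<rho> (a \<otimes>\<^bsub>G\<^esub> x) z"
      using a(2) G.m_comm[OF x a_carrier] by simp
    also have "\<dots> = \<rho> a v"
      using rep_mult[OF a_carrier x] z(2) by simp
    finally show ?thesis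
      using v rep_image_act_span_subset_set_mult[OF a(1) A C] by blast
  qed
  with z(1) have "z \<in> act_preimage (x <#\<^bsub>G\<^esub> A) Z (act_span scale \<rho> (C <#>\<^bsub>G\<^esub> A) Z)"
    unfolding act_preimage_def by blast
  with z(2) show "v \<in> \<rho> x ` act_preimage (x <#\<^bsub>G\<^esub> A) Z (act_span scale \<rho> (C <#>\<^bsub>G\<^esub> A) Z)"
    by (simp only: image_eqI)
qed

lemma dim_act_span_insert_ge:
  assumes x: "x \<in> carrier G" and A: "A \<subseteq> carrier G" and C: "C \<subseteq> carrier G" and Z: "subspace Z"
  shows "dim (act_span scale \<rho> C Z) + dim Z
    \<le> dim (act_span scale \<rho> (insert x C) Z)
      + dim (act_preimage (x <#\<^bsub>G\<^esub> A) Z (act_span scale \<rho> (C <#>\<^bsub>G\<^esub> A) Z))"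
proof -
  have "dim (act_span scale \<rho> (C \<union> {x}) Z) + dim (act_span scale \<rho> C Z \<inter> act_span scale \<rho> {x} Z)
      = dim (act_span scale \<rho> C Z) + dim (act_span scale \<rho> {x} Z)"
    by (rule dim_act_span_Un)
  then have "dim (act_span scale \<rho> (insert x C) Z) + dim (act_span scale \<rho> C Z \<inter> \<rho> x ` Z)
      = dim (act_span scale \<rho> C Z) + dim Z"
    by (simp only: Un_insert_right Un_empty_right act_span_singleton[OF x Z] dim_rep_image[OF x])
  moreover have "dim (act_span scale \<rho> C Z \<inter> \<rho> x ` Z)
      \<le> dim (act_preimage (x <#\<^bsub>G\<^esub> A) Z (act_span scale \<rho> (C <#>\<^bsub>G\<^esub> A) Z))"
    using dim_subset[OF act_span_inter_rep_image_subset[OF x A C]] dim_rep_image[OF x] by simp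
  ultimately show ?thesis
    by linarith
qed

context
  fixes A Z K
  assumes A: "A \<subseteq> carrier G" and Z: "subspace Z" and K: "0 \<le> K"
    and ratio: "real (dim (act_span scale \<rho> A Z)) = K * real (dim Z)"
    and minimal: "\<And>W. subspace W \<Longrightarrow> W \<subseteq> Z \<Longrightarrow> K * real (dim W) \<le> real (dim (act_span scale \<rho> A W))"
begin

lemma dim_act_span_insert_set_mult_le:
  assumes x: "x \<in> carrier G"
  shows "real (dim (act_span scale \<rho> (insert x C <#>\<^bsub>G\<^esub> A) Z))
      + K * real (dim (act_preimage (x <#\<^bsub>G\<^esub> A) Z (act_span scale \<rho> (C <#>\<^bsub>G\<^esub> A) Z)))
    \<le> real (dim (act_span scale \<rho> (C <#>\<^bsub>G\<^esub> A) Z)) + K * real (dim Z)"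
proof -
  define P where "P = act_span scale \<rho> (C <#>\<^bsub>G\<^esub> A) Z"
  define Q where "Q = act_span scale \<rho> (x <#\<^bsub>G\<^esub> A) Z"
  define W where "W = act_preimage (x <#\<^bsub>G\<^esub> A) Z P"
  have xA: "x <#\<^bsub>G\<^esub> A \<subseteq> carrier G"
    using A x by (rule G.l_coset_subset_G)
  have sum: "dim (act_span scale \<rho> (insert x C <#>\<^bsub>G\<^esub> A) Z) + dim (P \<inter> Q) = dim P + dim Q"
    unfolding P_def Q_def insert_set_mult by (rule dim_act_span_Un)
  have dim_Q: "dim Q = dim (act_span scale \<rho> A Z)"
    unfolding Q_def using dim_act_span_l_coset[OF x A] .
  have "subspace W"
    unfolding W_def P_def using Z xA by (simp add: subspace_act_preimage)
  moreover have "W \<subseteq> Z"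
    by (auto simp: W_def act_preimage_def)
  ultimately have "K * real (dim W) \<le> real (dim (act_span scale \<rho> A W))"
    by (rule minimal)
  also have "\<dots> = real (dim (act_span scale \<rho> (x <#\<^bsub>G\<^esub> A) W))"
    using dim_act_span_l_coset[OF x A] by simp
  also have "\<dots> \<le> real (dim (P \<inter> Q))"
    unfolding W_def Q_def using act_span_act_preimage_subset[of P] by (simp add: P_def dim_subset)
  finally have "K * real (dim W) \<le> real (dim (P \<inter> Q))" .
  with sum dim_Q ratio show ?thesis
    unfolding W_def P_def by linarith
qed

lemma dim_act_span_set_mult_le:
  assumes "finite C" "C \<subseteq> carrier G"
  shows "real (dim (act_span scale \<rho> (C <#>\<^bsub>G\<^esub> A) Z)) \<le> K * real (dim (act_span scale \<rho> C Z))"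
  using assms
proof (induction C rule: finite_induct)
  case empty
  then show ?case
    by (simp add: set_mult_def act_span_def)
next
  case (insert x C)
  then have x: "x \<in> carrier G" and C: "C \<subseteq> carrier G"
    by auto
  define W where "W = act_preimage (x <#\<^bsub>G\<^esub> A) Z (act_span scale \<rho> (C <#>\<^bsub>G\<^esub> A) Z)"
  have "real (dim (act_span scale \<rho> C Z)) + real (dim Z)
      \<le> real (dim (act_span scale \<rho> (insert x C) Z)) + real (dim W)"
    using dim_act_span_insert_ge[OF x A C Z] unfolding W_def by linarith
  from mult_left_mono[OF this K]
  have "K * real (dim (act_span scale \<rho> C Z)) + K * real (dim Z)
      \<le> K * real (dim (act_span scale \<rho> (insert x C) Z)) + K * real (dim W)"
    by (simp add: distrib_left)
  with insert.IH[OF C] dim_act_span_insert_set_mult_le[OF x, of C] show ?case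
    unfolding W_def by linarith
qed

lemma dim_act_span_set_pow_le:
  assumes "finite A"
  shows "real (dim (act_span scale \<rho> (set_pow G A n) Z)) \<le> K ^ n * real (dim Z)"
proof (induction n)
  case 0
  show ?case
    using act_span_one[OF Z] by simp
next
  case (Suc n)
  have "real (dim (act_span scale \<rho> (set_pow G A (Suc n)) Z))
      \<le> K * real (dim (act_span scale \<rho> (set_pow G A n) Z))"
    unfolding set_pow_Suc_set_mult
    using assms A by (intro dim_act_span_set_mult_le) (simp_all add: finite_set_pow G.set_pow_subset_carrier)
  also have "\<dots> \<le> K * (K ^ n * real (dim Z))"
    using Suc.IH K by (rule mult_left_mono)
  finally show ?case
    by simp
qed

end

theorem ex_subspace_dim_act_span_set_pow_le:
  assumes A: "finite A" "A \<subseteq> carrier G" and Y: "span Y \<noteq> {0}"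
    and expansion: "real (dim (act_span scale \<rho> A Y)) \<le> \<alpha> * real (dim (span Y))"
  shows "\<exists>Z. subspace Z \<and> Z \<subseteq> span Y \<and> Z \<noteq> {0} \<and>
    (\<forall>n. real (dim (act_span scale \<rho> (set_pow G A n) Z)) \<le> \<alpha> ^ n * real (dim Z))"
proof -
  obtain Z K where Z: "subspace Z" "Z \<subseteq> span Y" "Z \<noteq> {0}" and K: "0 \<le> K"
    and ratio: "real (dim (act_span scale \<rho> A Z)) = K * real (dim Z)"
    and minimal: "\<And>W. subspace W \<Longrightarrow> W \<subseteq> span Y \<Longrightarrow> K * real (dim W) \<le> real (dim (act_span scale \<rho> A W))"
    using obtain_subspace_minimal_expansion[OF Y, where S = A] by blast
  have "K * real (dim (span Y)) \<le> \<alpha> * real (dim (span Y))"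
    using minimal[of "span Y"] expansion act_span_span[OF A(2)] by simp
  with dim_pos[OF subspace_span Y] have "K \<le> \<alpha>"
    by simp
  have "real (dim (act_span scale \<rho> (set_pow G A n) Z)) \<le> \<alpha> ^ n * real (dim Z)" for n
  proof -
    have "real (dim (act_span scale \<rho> (set_pow G A n) Z)) \<le> K ^ n * real (dim Z)"
      using Z minimal by (intro dim_act_span_set_pow_le[OF A(2) Z(1) K ratio _ A(1)]) auto
    also have "\<dots> \<le> \<alpha> ^ n * real (dim Z)"
      using K \<open>K \<le> \<alpha>\<close> by (simp add: mult_right_mono power_mono)
    finally show ?thesis .
  qed
  with Z show ?thesis
    by blast
qed

end

theorem mainTheorem19:
  fixes G :: "('g, 'b) monoid_scheme"
    and scale :: "'k::field \<Rightarrow> 'v::ab_group_add \<Rightarrow> 'v"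
    and \<rho> :: "'g \<Rightarrow> 'v \<Rightarrow> 'v"
    and A :: "'g set" and Y :: "'v set" and \<alpha> :: real
  assumes "comm_group G"
    and "Vector_Spaces.vector_space scale"
    and "\<exists>B. finite B \<and> Modules.module.span scale B = UNIV"
    and "is_representation G scale \<rho>"
    and "finite A" and "A \<noteq> {}" and "A \<subseteq> carrier G"
    and "Modules.module.span scale Y \<noteq> {0}"
    and "\<alpha> \<ge> 0"
    and "real (Vector_Spaces.vector_space.dim scale (act_span scale \<rho> A Y))
           \<le> \<alpha> * real (Vector_Spaces.vector_space.dim scale (Modules.module.span scale Y))"
  shows "\<exists>Z. Modules.module.subspace scale Z \<and> Z \<subseteq> Modules.module.span scale Y \<and> Z \<noteq> {0} \<and>
           (\<forall>n::nat. n \<ge> 1 \<longrightarrow>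
              real (Vector_Spaces.vector_space.dim scale (act_span scale \<rho> (set_pow G A n) Z))
                \<le> \<alpha> ^ n * real (Vector_Spaces.vector_space.dim scale Z))"
proof -
  interpret vector_space scale
    by fact
  obtain Basis where "finite_dimensional_vector_space scale Basis"
    using assms(3) obtain_finite_dimensional_if_finite_span by blast
  with assms(1,4) interpret abelian_representation scale Basis G \<rho>
    by (simp add: abelian_representation_def abelian_representation_axioms_def
        linear_representation_def linear_representation_axioms_def)
  show ?thesis
    using ex_subspace_dim_act_span_set_pow_le[OF assms(5,7,8,10)] by blast
qed

end
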